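(* Let $V$ be a partially expanded network (as defined in the context) satisfying Properties P1, P2 and P3, with consumption values $q_v$, $v\in V$, given by P3. Suppose the discretized TDASP has a feasible solution. Then the TDASP restricted to $V$ has a feasible solution, and its optimal value (minimum of $\theta_n(t_n)$) is less than or equal to the optimal value of the discretized TDASP.
   Context: Data: activities $1,\dots,n$ with time windows $[e_i,l_i]$, functions $\tau_i$, $\rho_i$, $\theta_i(t)=t+\tau_i(t)$, and a capacity $Q$. Every $\theta_i$ is non-decreasing (FIFO property). Let $\varepsilon>0$ be such that all $e_i,l_i$ are integer multiples of $\varepsilon$, and let $T_i=\{e_i,e_i+\varepsilon,\dots,l_i\}$. The discretized TDASP (fully expanded network) is: choose $t_i\in T_i$ ($1\le i\le n$) minimising $\theta_n(t_n)$ subject to $\theta_i(t_i)\le t_{i+1}$ for $1\le i<n$ and $\sum_{i=1}^n\rho_i(t_i)\le Q$. A partially expanded network is a set $V\subseteq\{(i,t):1\le i\le n,\ t\in T_i\}$. It satisfies Property P1 if $(i,e_i)\in V$ and $(i,l_i)\in V$ for every $i$; Property P2 if for every $(i,t)\in V$ with $i<n$ and $e_{i+1}<\varepsilon\lceil\theta_i(t)/\varepsilon\rceil<l_{i+1}$ we have $(i+1,\varepsilon\lceil\theta_i(t)/\varepsilon\rceil)\in V$; Property P3 if every $(i,t)\in V$ with $t<l_i$ is assigned the value $q_{(i,t)}=\min_{\bar t\in\{t,t+\varepsilon,\dots,t'-\varepsilon\}}\rho_i(\bar t)$ where $t'>t$ is the smallest value with $(i,t')\in V$, and every $(i,l_i)\in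 V$ is assigned $q_{(i,l_i)}=\rho_i(l_i)$. The TDASP restricted to $V$ is: choose $(1,t_1),\dots,(n,t_n)\in V$ minimising $\theta_n(t_n)$ subject to $\theta_i(t_i)\le t_{i+1}$ for $1\le i<n$ and $\sum_{i=1}^n q_{(i,t_i)}\le Q$. *)

theory Defs
  imports Complex_Main
begin

definition Tset :: "real \<Rightarrow> real \<Rightarrow> real \<Rightarrow> real set" where
  "Tset eps ei li = {t. \<exists>k::nat. t = ei + real k * eps \<and> t \<le> li}"

definition theta :: "(nat \<Rightarrow> real \<Rightarrow> real) \<Rightarrow> nat \<Rightarrow> real \<Rightarrow> real" where
  "theta tau i t = t + tau i t"

definition round_up :: "real \<Rightarrow> real \<Rightarrow> real" where
  "round_up eps x = eps * of_int (ceiling (x / eps))"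

definition nodes :: "nat \<Rightarrow> real \<Rightarrow> (nat \<Rightarrow> real) \<Rightarrow> (nat \<Rightarrow> real) \<Rightarrow> (nat \<times> real) set" where
  "nodes n eps e l = {(i, t). 1 \<le> i \<and> i \<le> n \<and> t \<in> Tset eps (e i) (l i)}"

definition P1 :: "nat \<Rightarrow> (nat \<Rightarrow> real) \<Rightarrow> (nat \<Rightarrow> real) \<Rightarrow> (nat \<times> real) set \<Rightarrow> bool" where
  "P1 n e l V \<longleftrightarrow> (\<forall>i. 1 \<le> i \<and> i \<le> n \<longrightarrow> (i, e i) \<in> V \<and> (i, l i) \<in> V)"

definition P2 :: "nat \<Rightarrow> real \<Rightarrow> (nat \<Rightarrow> real) \<Rightarrow> (nat \<Rightarrow> real) \<Rightarrow> (nat \<Rightarrow> real \<Rightarrow> real)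
    \<Rightarrow> (nat \<times> real) set \<Rightarrow> bool" where
  "P2 n eps e l tau V \<longleftrightarrow>
     (\<forall>i t. (i, t) \<in> V \<and> i < n \<and> e (i+1) < round_up eps (theta tau i t)
              \<and> round_up eps (theta tau i t) < l (i+1)
          \<longrightarrow> (i+1, round_up eps (theta tau i t)) \<in> V)"

definition next_time :: "(nat \<times> real) set \<Rightarrow> nat \<Rightarrow> real \<Rightarrow> real" where
  "next_time V i t = Min {t'. (i, t') \<in> V \<and> t < t'}"

definition P3 :: "real \<Rightarrow> (nat \<Rightarrow> real) \<Rightarrow> (nat \<Rightarrow> real) \<Rightarrow> (nat \<Rightarrow> real \<Rightarrow> real)
    \<Rightarrow> (nat \<times> real) set \<Rightarrow> (nat \<Rightarrow> real \<Rightarrow> real) \<Rightarrow> bool" where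
  "P3 eps e l rho V q \<longleftrightarrow>
     (\<forall>i t. (i, t) \<in> V \<and> t < l i \<longrightarrow>
        q i t = Min (rho i ` {s \<in> Tset eps (e i) (l i). t \<le> s \<and> s < next_time V i t}))
   \<and> (\<forall>i. (i, l i) \<in> V \<longrightarrow> q i (l i) = rho i (l i))"

definition disc_feasible :: "nat \<Rightarrow> real \<Rightarrow> (nat \<Rightarrow> real) \<Rightarrow> (nat \<Rightarrow> real) \<Rightarrow> (nat \<Rightarrow> real \<Rightarrow> real)
    \<Rightarrow> (nat \<Rightarrow> real \<Rightarrow> real) \<Rightarrow> real \<Rightarrow> (nat \<Rightarrow> real) \<Rightarrow> bool" where
  "disc_feasible n eps e l tau rho Q t \<longleftrightarrow>
     (\<forall>i. 1 \<le> i \<and> i \<le> n \<longrightarrow> t i \<in> Tset eps (e i) (l i))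
   \<and> (\<forall>i. 1 \<le> i \<and> i < n \<longrightarrow> theta tau i (t i) \<le> t (i+1))
   \<and> (\<Sum>i=1..n. rho i (t i)) \<le> Q"

definition restr_feasible :: "nat \<Rightarrow> (nat \<Rightarrow> real \<Rightarrow> real) \<Rightarrow> (nat \<times> real) set
    \<Rightarrow> (nat \<Rightarrow> real \<Rightarrow> real) \<Rightarrow> real \<Rightarrow> (nat \<Rightarrow> real) \<Rightarrow> bool" where
  "restr_feasible n tau V q Q t \<longleftrightarrow>
     (\<forall>i. 1 \<le> i \<and> i \<le> n \<longrightarrow> (i, t i) \<in> V)
   \<and> (\<forall>i. 1 \<le> i \<and> i < n \<longrightarrow> theta tau i (t i) \<le> t (i+1))
   \<and> (\<Sum>i=1..n. q i (t i)) \<le> Q"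

definition disc_opt :: "nat \<Rightarrow> real \<Rightarrow> (nat \<Rightarrow> real) \<Rightarrow> (nat \<Rightarrow> real) \<Rightarrow> (nat \<Rightarrow> real \<Rightarrow> real)
    \<Rightarrow> (nat \<Rightarrow> real \<Rightarrow> real) \<Rightarrow> real \<Rightarrow> real" where
  "disc_opt n eps e l tau rho Q =
     Min {theta tau n (t n) | t. disc_feasible n eps e l tau rho Q t}"

definition restr_opt :: "nat \<Rightarrow> (nat \<Rightarrow> real \<Rightarrow> real) \<Rightarrow> (nat \<times> real) set
    \<Rightarrow> (nat \<Rightarrow> real \<Rightarrow> real) \<Rightarrow> real \<Rightarrow> real" where
  "restr_opt n tau V q Q = Min {theta tau n (t n) | t. restr_feasible n tau V q Q t}"

end

theory Submission
  imports Defs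
begin

text \<open>Round every start time of a feasible discretized schedule down to the latest node of V
  not after it. P1 makes this well defined. Precedence survives because the rounded-up arrival
  time at the next activity is either a node of V (P2) or clipped to the window ends (P1), and it
  still lies below the next original start time, which is on the grid. Consumption does not grow
  because, by P3, the value at a node is the minimum of rho over the grid interval up to the next
  node, which contains the original start time.\<close>

lemma finite_Tset:
  assumes "eps > 0"
  shows "finite (Tset eps a b)"
proof (rule finite_subset)
  show "Tset eps a b \<subseteq> (\<lambda>k::nat. a + real k * eps) ` {..nat \<lceil>(b - a) / eps\<rceil>}"
  proof
    fix x assume "x \<in> Tset eps a b"
    then obtain k :: nat where x: "x = a + real k * eps" "x \<le> b"
      by (auto simp: Tset_def)
    then have "real k \<le> (b - a) / eps"
      using assms by (simp add: pos_le_divide_eq)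
    also have "\<dots> \<le> of_int \<lceil>(b - a) / eps\<rceil>"
      by (rule le_of_int_ceiling)
    finally have "k \<le> nat \<lceil>(b - a) / eps\<rceil>"
      by linarith
    then show "x \<in> (\<lambda>k::nat. a + real k * eps) ` {..nat \<lceil>(b - a) / eps\<rceil>}"
      using x by auto
  qed
qed simp

lemma Tset_on_grid:
  assumes "a = of_int k * eps" "u \<in> Tset eps a b"
  shows "\<exists>m::int. u = of_int m * eps"
proof -
  obtain j :: nat where "u = a + real j * eps"
    using assms(2) by (auto simp: Tset_def)
  then have "u = of_int (k + int j) * eps"
    using assms(1) by (simp add: algebra_simps)
  then show ?thesis by blast
qed

lemma le_round_up:
  assumes "eps > 0"
  shows "x \<le> round_up eps x"
proof -
  have "x / eps \<le> of_int \<lceil>x / eps\<rceil>"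
    by (rule le_of_int_ceiling)
  then have "x \<le> of_int \<lceil>x / eps\<rceil> * eps"
    using pos_divide_le_eq[OF assms] by blast
  then show ?thesis
    by (simp add: round_up_def mult.commute)
qed

lemma round_up_le_grid:
  assumes "eps > 0" "x \<le> of_int m * eps"
  shows "round_up eps x \<le> of_int m * eps"
proof -
  have "\<lceil>x / eps\<rceil> \<le> m"
    using assms by (simp add: ceiling_le_iff pos_divide_le_eq)
  then show ?thesis
    using assms(1) by (simp add: round_up_def)
qed

lemma Min_le_Min_if_dominated:
  fixes A B :: "'a::linorder set"
  assumes "finite A" "A \<noteq> {}" "finite B" "\<And>a. a \<in> A \<Longrightarrow> \<exists>b\<in>B. b \<le> a"
  shows "Min B \<le> Min A"
proof -
  obtain b where "b \<in> B" "b \<le> Min A"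
    using assms(1,2,4) Min_in by blast
  then show ?thesis
    using assms(3) by (meson Min_le order.trans)
qed

locale partially_expanded_network =
  fixes n :: nat and eps :: real and e l :: "nat \<Rightarrow> real"
    and tau rho :: "nat \<Rightarrow> real \<Rightarrow> real"
    and V :: "(nat \<times> real) set" and q :: "nat \<Rightarrow> real \<Rightarrow> real"
  assumes eps_pos: "eps > 0"
    and windows_on_grid: "\<forall>i. 1 \<le> i \<and> i \<le> n \<longrightarrow>
      (\<exists>k::int. e i = of_int k * eps) \<and> (\<exists>k::int. l i = of_int k * eps)"
    and mono_theta: "\<forall>i. 1 \<le> i \<and> i \<le> n \<longrightarrow> mono (theta tau i)"
    and V_subset: "V \<subseteq> nodes n eps e l"
    and P1: "P1 n e l V"
    and P2: "P2 n eps e l tau V"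
    and P3: "P3 eps e l rho V q"
begin

lemma V_in_window: "(i, u) \<in> V \<Longrightarrow> u \<in> Tset eps (e i) (l i)"
  using V_subset by (auto simp: nodes_def)

lemma window_ends_in_V:
  assumes "1 \<le> i" "i \<le> n"
  shows "(i, e i) \<in> V" "(i, l i) \<in> V"
  using P1 assms by (auto simp: P1_def)

lemma finite_V_slice: "finite {u. (i, u) \<in> V \<and> P u}"
  by (rule finite_subset[OF _ finite_Tset[OF eps_pos, of "e i" "l i"]]) (auto dest: V_in_window)

lemma window_bounds: "t \<in> Tset eps (e i) (l i) \<Longrightarrow> e i \<le> t \<and> t \<le> l i"
  using eps_pos by (auto simp: Tset_def)

definition round_down :: "nat \<Rightarrow> real \<Rightarrow> real" where
  "round_down i t = Max {u. (i, u) \<in> V \<and> u \<le> t}"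

context
  fixes i t
  assumes i: "1 \<le> i" "i \<le> n" and t: "t \<in> Tset eps (e i) (l i)"
begin

lemma round_down_mem: "round_down i t \<in> {u. (i, u) \<in> V \<and> u \<le> t}"
proof -
  have "e i \<in> {u. (i, u) \<in> V \<and> u \<le> t}"
    using window_ends_in_V(1)[OF i] window_bounds[OF t] by simp
  then show ?thesis
    unfolding round_down_def by (intro Max_in finite_V_slice) auto
qed

lemma round_down_in_V: "(i, round_down i t) \<in> V"
  using round_down_mem by simp

lemma round_down_le: "round_down i t \<le> t"
  using round_down_mem by simp

lemma le_round_down: "(i, u) \<in> V \<Longrightarrow> u \<le> t \<Longrightarrow> u \<le> round_down i t"
  unfolding round_down_def by (simp add: finite_V_slice)

end

lemma node_between:
  assumes i: "1 \<le> i" "i < n" and s: "(i, s) \<in> V"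
    and t: "t \<in> Tset eps (e (i+1)) (l (i+1))" and le: "theta tau i s \<le> t"
  shows "\<exists>w. (i+1, w) \<in> V \<and> theta tau i s \<le> w \<and> w \<le> t"
proof -
  define r where "r = round_up eps (theta tau i s)"
  have i1: "1 \<le> i+1" "i+1 \<le> n" using i by auto
  have "theta tau i s \<le> r"
    unfolding r_def using le_round_up[OF eps_pos] .
  moreover have "r \<le> t"
  proof -
    obtain k where "e (i+1) = of_int k * eps"
      using windows_on_grid i1 by blast
    then obtain m where m: "t = of_int m * eps"
      using Tset_on_grid t by blast
    show ?thesis
      unfolding r_def m using round_up_le_grid[OF eps_pos] le m by simp
  qed
  moreover have "\<exists>w. (i+1, w) \<in> V \<and> r \<le> w \<and> w \<le> t"
  proof -
    consider "r \<le> e (i+1)" | "e (i+1) < r" "r < l (i+1)" | "l (i+1) \<le> r"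
      by linarith
    then show ?thesis
    proof cases
      case 1 then show ?thesis using window_ends_in_V(1)[OF i1] window_bounds[OF t] by auto
    next
      case 2 then show ?thesis using P2 i s \<open>r \<le> t\<close> by (auto simp: P2_def r_def)
    next
      case 3 then show ?thesis using window_ends_in_V(2)[OF i1] window_bounds[OF t] \<open>r \<le> t\<close> by auto
    qed
  qed
  ultimately show ?thesis by fastforce
qed

lemma theta_round_down_le_round_down:
  assumes i: "1 \<le> i" "i < n"
    and t: "t \<in> Tset eps (e i) (l i)" and t': "t' \<in> Tset eps (e (i+1)) (l (i+1))"
    and prec: "theta tau i t \<le> t'"
  shows "theta tau i (round_down i t) \<le> round_down (i+1) t'"
proof -
  have "theta tau i (round_down i t) \<le> theta tau i t"
    using mono_theta i round_down_le[OF _ _ t] by (simp add: monoD)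
  then obtain w where "(i+1, w) \<in> V" "theta tau i (round_down i t) \<le> w" "w \<le> t'"
    using node_between[OF i round_down_in_V[OF _ _ t] t'] prec i by force
  moreover have "w \<le> round_down (i+1) t'"
    using le_round_down[OF _ _ t'] calculation i by simp
  ultimately show ?thesis by linarith
qed

lemma q_round_down_le_rho:
  assumes i: "1 \<le> i" "i \<le> n" and t: "t \<in> Tset eps (e i) (l i)"
  shows "q i (round_down i t) \<le> rho i t"
proof (cases "round_down i t = l i")
  case True
  then have "t = l i"
    using round_down_le[OF i t] window_bounds[OF t] by simp
  then show ?thesis
    using P3 True window_ends_in_V(2)[OF i] by (simp add: P3_def)
next
  case False
  let ?s = "round_down i t"
  have s_lt: "?s < l i"
    using False round_down_le[OF i t] window_bounds[OF t] by simp
  have "t < next_time V i ?s"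
  proof -
    let ?N = "{t'. (i, t') \<in> V \<and> ?s < t'}"
    have "l i \<in> ?N"
      using window_ends_in_V(2)[OF i] s_lt by simp
    then have "Min ?N \<in> ?N"
      using Min_in finite_V_slice by blast
    then show ?thesis
      unfolding next_time_def using le_round_down[OF i t] by force
  qed
  then have "t \<in> {u \<in> Tset eps (e i) (l i). ?s \<le> u \<and> u < next_time V i ?s}"
    using t round_down_le[OF i t] by simp
  then have "Min (rho i ` {u \<in> Tset eps (e i) (l i). ?s \<le> u \<and> u < next_time V i ?s}) \<le> rho i t"
    using finite_Tset[OF eps_pos] by (intro Min_le) auto
  then show ?thesis
    using P3 s_lt round_down_in_V[OF i t] by (simp add: P3_def)
qed

lemma restr_feasible_round_down:
  assumes "disc_feasible n eps e l tau rho Q t"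
  shows "restr_feasible n tau V q Q (\<lambda>i. round_down i (t i))"
proof -
  have t: "t i \<in> Tset eps (e i) (l i)" if "1 \<le> i" "i \<le> n" for i
    using assms that by (simp add: disc_feasible_def)
  have "(\<Sum>i=1..n. q i (round_down i (t i))) \<le> (\<Sum>i=1..n. rho i (t i))"
    using q_round_down_le_rho t by (intro sum_mono) simp
  moreover have "theta tau i (round_down i (t i)) \<le> round_down (i+1) (t (i+1))"
    if "1 \<le> i" "i < n" for i
    using assms that t theta_round_down_le_round_down by (simp add: disc_feasible_def)
  ultimately show ?thesis
    using assms t round_down_in_V by (simp add: disc_feasible_def restr_feasible_def)
qed

lemma theta_round_down_le:
  assumes "1 \<le> n" "t \<in> Tset eps (e n) (l n)"
  shows "theta tau n (round_down n t) \<le> theta tau n t"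
  using assms mono_theta round_down_le[OF _ _ assms(2)] by (simp add: monoD)

lemma finite_final_values:
  assumes "1 \<le> n"
  shows "finite {theta tau n (t n) | t. restr_feasible n tau V q Q t}"
    and "finite {theta tau n (t n) | t. disc_feasible n eps e l tau rho Q t}"
proof -
  have fin: "finite (theta tau n ` Tset eps (e n) (l n))"
    using finite_Tset[OF eps_pos] by simp
  show "finite {theta tau n (t n) | t. restr_feasible n tau V q Q t}"
    using assms V_in_window by (intro finite_subset[OF _ fin]) (auto simp: restr_feasible_def)
  show "finite {theta tau n (t n) | t. disc_feasible n eps e l tau rho Q t}"
    using assms by (intro finite_subset[OF _ fin]) (auto simp: disc_feasible_def)
qed

end

theorem lemma3:
  fixes n :: nat and eps :: real and e l :: "nat \<Rightarrow> real"
    and tau rho :: "nat \<Rightarrow> real \<Rightarrow> real" and Q :: real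
    and V :: "(nat \<times> real) set" and q :: "nat \<Rightarrow> real \<Rightarrow> real"
  assumes "1 \<le> n"
    and "eps > 0"
    and "\<forall>i. 1 \<le> i \<and> i \<le> n \<longrightarrow> (\<exists>k::int. e i = of_int k * eps) \<and> (\<exists>k::int. l i = of_int k * eps)"
    and "\<forall>i. 1 \<le> i \<and> i \<le> n \<longrightarrow> mono (theta tau i)"
    and "V \<subseteq> nodes n eps e l"
    and "P1 n e l V"
    and "P2 n eps e l tau V"
    and "P3 eps e l rho V q"
    and "\<exists>t. disc_feasible n eps e l tau rho Q t"
  shows "(\<exists>t. restr_feasible n tau V q Q t)
       \<and> restr_opt n tau V q Q \<le> disc_opt n eps e l tau rho Q"
proof -
  interpret partially_expanded_network n eps e l tau rho V q
    using assms(2-8) by unfold_locales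
  have dominated: "\<exists>s. restr_feasible n tau V q Q s \<and> theta tau n (s n) \<le> theta tau n (t n)"
    if t: "disc_feasible n eps e l tau rho Q t" for t
  proof -
    have "t n \<in> Tset eps (e n) (l n)"
      using t assms(1) by (simp add: disc_feasible_def)
    then show ?thesis
      using restr_feasible_round_down[OF t] theta_round_down_le assms(1) by blast
  qed
  have "restr_opt n tau V q Q \<le> disc_opt n eps e l tau rho Q"
    unfolding restr_opt_def disc_opt_def
    using finite_final_values[OF assms(1)] assms(9) dominated
    by (intro Min_le_Min_if_dominated) blast+
  then show ?thesis
    using assms(9) dominated by blast
qed

end
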